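(* Let $\mathbf{A}\in\mathbb{C}^{n\times n}$ be nonsingular, $\mathbf{b}\in\mathbb{C}^n$ nonzero, and $k\ge1$ such that $\dim\mathcal{K}_{k+1}(\mathbf{A},\mathbf{b})=k+1$. Then \[ \min_{0\leq j\leq k}\|\mathbf{A}^{-1}\mathbf{b}-\mathbf{x}_j^{\mathrm F}\|_2\;\leq\;\sqrt{k+1}\,\cdot\,\kappa(\mathbf{A})\,\cdot\,\|\mathbf{A}^{-1}\mathbf{b}-\mathbf{x}_k^{\mathrm G}\|_2, \] where $\kappa(\mathbf{A})=\|\mathbf{A}\|_2\|\mathbf{A}^{-1}\|_2$.
   Context: The Krylov subspace is $\mathcal{K}_k(\mathbf{A},\mathbf{b})=\operatorname{span}\{\mathbf{b},\mathbf{A}\mathbf{b},\dots,\mathbf{A}^{k-1}\mathbf{b}\}$. The Arnoldi algorithm produces an orthonormal basis $\mathbf{Q}_k=[\mathbf{q}_1,\dots,\mathbf{q}_k]$ of $\mathcal{K}_k(\mathbf{A},\mathbf{b})$ with $\mathbf{q}_1=\mathbf{b}/\|\mathbf{b}\|_2$, and a $(k+1)\times k$ upper Hessenberg matrix $\mathbf{H}_{k+1,k}$ (entries $h_{i,j}$, with $h_{j+1,j}>0$) satisfying $\mathbf{A}\mathbf{Q}_k=\mathbf{Q}_{k+1}\mathbf{H}_{k+1,k}$; $\mathbf{H}_k$ denotes $\mathbf{H}_{k+1,k}$ with its last row deleted. With $\mathbf{e}_1=[1,0,\dots,0]^{\mathsf T}$, the FOM and GMRES iterates (zero initial guess, $\mathbf{x}_0^{\mathrm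 F}=\mathbf{x}_0^{\mathrm G}=\mathbf{0}$) are, for $j\ge1$, $\mathbf{x}_j^{\mathrm F}=\|\mathbf{b}\|_2\mathbf{Q}_j\mathbf{H}_j^{-1}\mathbf{e}_1$ and $\mathbf{x}_j^{\mathrm G}=\|\mathbf{b}\|_2\mathbf{Q}_j\mathbf{H}_{j+1,j}^{\dagger}\mathbf{e}_1$ ($\dagger$ = pseudoinverse); equivalently $\mathbf{x}_j^{\mathrm G}$ minimizes $\|\mathbf{b}-\mathbf{A}\mathbf{x}\|_2$ over $\mathbf{x}\in\mathcal{K}_j(\mathbf{A},\mathbf{b})$. Convention: if $\mathbf{H}_j$ is singular, the FOM iterate $\mathbf{x}_j^{\mathrm F}$ is undefined and its error norm $\|\mathbf{A}^{-1}\mathbf{b}-\mathbf{x}_j^{\mathrm F}\|_2$ is defined to be $+\infty$. *)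

theory Defs
  imports "HOL-Analysis.Analysis"
begin

text \<open>Vectors in C^n are complex^'n (n = CARD('n)); matrices complex^'n^'n.
  The norm on complex^'n is the Euclidean 2-norm.\<close>

definition cinner :: "complex^'n \<Rightarrow> complex^'n \<Rightarrow> complex" where
  "cinner u v = (\<Sum>i\<in>UNIV. cnj (u$i) * v$i)"

definition krylov :: "complex^'n^'n \<Rightarrow> complex^'n \<Rightarrow> nat \<Rightarrow> (complex^'n) set" where
  "krylov A b j = vec.span {(((*v) A) ^^ i) b | i. i < j}"

definition mat_norm2 :: "complex^'n^'n \<Rightarrow> real" where
  "mat_norm2 A = onorm (\<lambda>x. A *v x)"

definition kappa :: "complex^'n^'n \<Rightarrow> real" where
  "kappa A = mat_norm2 A * mat_norm2 (matrix_inv A)"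

text \<open>Arnoldi (Gram-Schmidt) process: arnoldi_list A b j = [q_1, ..., q_(j+1)].\<close>
fun arnoldi_list :: "complex^'n^'n \<Rightarrow> complex^'n \<Rightarrow> nat \<Rightarrow> (complex^'n) list" where
  "arnoldi_list A b 0 = [of_real (1 / norm b) *s b]"
| "arnoldi_list A b (Suc j) =
     (let qs = arnoldi_list A b j;
          w = A *v last qs - (\<Sum>i<length qs. cinner (qs!i) (A *v last qs) *s (qs!i))
      in qs @ [of_real (1 / norm w) *s w])"

text \<open>arnoldi_q A b l is q_(l+1) (0-based index).\<close>
definition arnoldi_q :: "complex^'n^'n \<Rightarrow> complex^'n \<Rightarrow> nat \<Rightarrow> complex^'n" where
  "arnoldi_q A b l = arnoldi_list A b l ! l"

text \<open>Entry h_(i+1,l+1) of the Arnoldi Hessenberg matrix (0-based indices).\<close>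
definition arnoldi_h :: "complex^'n^'n \<Rightarrow> complex^'n \<Rightarrow> nat \<Rightarrow> nat \<Rightarrow> complex" where
  "arnoldi_h A b i l = cinner (arnoldi_q A b i) (A *v arnoldi_q A b l)"

definition H_nonsingular :: "complex^'n^'n \<Rightarrow> complex^'n \<Rightarrow> nat \<Rightarrow> bool" where
  "H_nonsingular A b j \<longleftrightarrow>
     (\<forall>y::nat \<Rightarrow> complex. (\<forall>i<j. (\<Sum>l<j. arnoldi_h A b i l * y l) = 0) \<longrightarrow> (\<forall>l<j. y l = 0))"

definition fom_coeffs :: "complex^'n^'n \<Rightarrow> complex^'n \<Rightarrow> nat \<Rightarrow> nat \<Rightarrow> complex" where
  "fom_coeffs A b j = (THE y. (\<forall>l\<ge>j. y l = 0) \<and>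
      (\<forall>i<j. (\<Sum>l<j. arnoldi_h A b i l * y l) = (if i = 0 then 1 else 0)))"

definition fom_iterate :: "complex^'n^'n \<Rightarrow> complex^'n \<Rightarrow> nat \<Rightarrow> complex^'n" where
  "fom_iterate A b j = of_real (norm b) *s (\<Sum>l<j. fom_coeffs A b j l *s arnoldi_q A b l)"

text \<open>FOM error norm, +infinity when H_j is singular (FOM iterate undefined).\<close>
definition fom_error :: "complex^'n^'n \<Rightarrow> complex^'n \<Rightarrow> nat \<Rightarrow> ereal" where
  "fom_error A b j =
     (if j = 0 then ereal (norm (matrix_inv A *v b))
      else if H_nonsingular A b j then ereal (norm (matrix_inv A *v b - fom_iterate A b j))
      else \<infinity>)"

definition gmres_iterate :: "complex^'n^'n \<Rightarrow> complex^'n \<Rightarrow> nat \<Rightarrow> complex^'n" where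
  "gmres_iterate A b j = (SOME x. x \<in> krylov A b j \<and>
      (\<forall>z\<in>krylov A b j. norm (b - A *v x) \<le> norm (b - A *v z)))"

end

theory Submission
  imports Defs
begin

text \<open>Write w_j = 1 / norm (b - A x_j^F)^2, with w_j = 0 when H_j is singular. The core
  inequality is that for every x in K_j and every scalar c,
  cmod c^2 \<le> norm (c b - A x)^2 * (w_0 + ... + w_j).
  It is proved by induction on j, splitting off the q_j-component of the residual c b - A x,
  which lies in K_(j+1): if H_j is singular, q_j = A v for some v in K_j and this component
  is absorbed into x; otherwise the FOM residual is a multiple of q_j, and the
  Cauchy-Schwarz inequality in R^2 adds w_j to the bound. Throughout, dim K_(k+1) = k + 1
  rules out a breakdown of the Arnoldi process and makes K_j the span of q_0, ..., q_(j-1)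
  (the Arnoldi vectors are indexed from 0, with q_0 = b / norm b).

  For the GMRES iterate, the largest weight w_j (j \<le> k) is at least the mean of
  w_0, ..., w_k, so norm (b - A x_j^F) \<le> sqrt (k + 1) * norm (b - A x_k^G). Multiplying the
  FOM residual by A^-1 and bounding the GMRES residual by norm A times the GMRES error
  gives the claim.\<close>

section \<open>Inner product and orthonormal families\<close>

lemma cinner_add_left: "cinner (u + v) w = cinner u w + cinner v w"
  by (simp add: cinner_def sum.distrib distrib_right)

lemma cinner_add_right: "cinner u (v + w) = cinner u v + cinner u w"
  by (simp add: cinner_def sum.distrib distrib_left)

lemma cinner_diff_right: "cinner u (v - w) = cinner u v - cinner u w"
  by (simp add: cinner_def sum_subtractf right_diff_distrib)

lemma cinner_scale_left: "cinner (c *s u) v = cnj c * cinner u v"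
  by (simp add: cinner_def sum_distrib_left algebra_simps)

lemma cinner_scale_right: "cinner u (c *s v) = c * cinner u v"
  by (simp add: cinner_def sum_distrib_left algebra_simps)

lemma cinner_zero_right [simp]: "cinner u 0 = 0"
  by (simp add: cinner_def)

lemma cinner_sum_right: "cinner u (\<Sum>i\<in>I. f i) = (\<Sum>i\<in>I. cinner u (f i))"
  by (induction I rule: infinite_finite_induct) (auto simp: cinner_add_right)

lemma cinner_commute: "cinner v u = cnj (cinner u v)"
  by (simp add: cinner_def mult.commute)

lemma cinner_self: "cinner x x = of_real ((norm x)\<^sup>2)"
proof -
  have "(norm x)\<^sup>2 = (\<Sum>i\<in>UNIV. (cmod (x $ i))\<^sup>2)"
    unfolding norm_vec_def L2_set_def by (simp add: sum_nonneg)
  show ?thesis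
    unfolding \<open>(norm x)\<^sup>2 = _\<close> cinner_def of_real_sum
    by (intro sum.cong refl) (metis complex_norm_square mult.commute)
qed

lemma norm_eq_1_iff_cinner_self: "norm x = 1 \<longleftrightarrow> cinner x x = 1"
proof -
  have "norm x = 1 \<longleftrightarrow> (norm x)\<^sup>2 = 1\<^sup>2"
    by (simp only: power2_eq_iff_nonneg[OF norm_ge_zero zero_le_one])
  also have "\<dots> \<longleftrightarrow> cinner x x = 1"
    unfolding cinner_self power_one of_real_eq_1_iff ..
  finally show ?thesis .
qed

lemma norm_add_sq_orthogonal:
  assumes "cinner u v = 0"
  shows "(norm (u + v))\<^sup>2 = (norm u)\<^sup>2 + (norm v)\<^sup>2"
proof -
  have "cinner v u = 0" using assms by (simp add: cinner_commute[of v u])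
  have "complex_of_real ((norm (u + v))\<^sup>2) = cinner (u + v) (u + v)"
    by (simp only: cinner_self)
  also have "\<dots> = cinner u u + cinner v v"
    using assms \<open>cinner v u = 0\<close> by (simp add: cinner_add_left cinner_add_right)
  also have "\<dots> = complex_of_real ((norm u)\<^sup>2 + (norm v)\<^sup>2)"
    by (simp only: cinner_self of_real_add)
  finally show ?thesis by (simp only: of_real_eq_iff)
qed

lemma norm_scale_vec: "norm (c *s (x::complex^'n)) = cmod c * norm x"
proof -
  have "(norm (c *s x))\<^sup>2 = (cmod c * norm x)\<^sup>2"
    unfolding norm_vec_def L2_set_def
    by (simp add: sum_nonneg power_mult_distrib norm_mult sum_distrib_left)
  then show ?thesis by (simp add: power2_eq_iff_nonneg)
qed

lemma norm_normalize: "(x::complex^'n) \<noteq> 0 \<Longrightarrow> norm (of_real (1 / norm x) *s x) = 1"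
  by (simp add: norm_scale_vec norm_divide)

lemma scale_normalize:
  "(x::complex^'n) \<noteq> 0 \<Longrightarrow> of_real (norm x) *s (of_real (1 / norm x) *s x) = x"
  by (simp add: vec.scale_scale)

definition orthonormal_upto :: "(nat \<Rightarrow> complex^'n) \<Rightarrow> nat \<Rightarrow> bool" where
  "orthonormal_upto q m \<longleftrightarrow> (\<forall>i<m. \<forall>l<m. cinner (q i) (q l) = (if i = l then 1 else 0))"

definition orth_proj :: "(nat \<Rightarrow> complex^'n) \<Rightarrow> nat \<Rightarrow> complex^'n \<Rightarrow> complex^'n" where
  "orth_proj q m v = (\<Sum>i<m. cinner (q i) v *s q i)"

lemma orthonormal_upto_mono: "orthonormal_upto q m \<Longrightarrow> m' \<le> m \<Longrightarrow> orthonormal_upto q m'"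
  by (simp add: orthonormal_upto_def)

lemma orthonormal_upto_Suc:
  "orthonormal_upto q (Suc m) \<longleftrightarrow> orthonormal_upto q m \<and> norm (q m) = 1 \<and>
     (\<forall>i<m. cinner (q i) (q m) = 0)"
proof
  assume "orthonormal_upto q (Suc m)"
  then show "orthonormal_upto q m \<and> norm (q m) = 1 \<and> (\<forall>i<m. cinner (q i) (q m) = 0)"
    unfolding orthonormal_upto_def norm_eq_1_iff_cinner_self by force
next
  assume *: "orthonormal_upto q m \<and> norm (q m) = 1 \<and> (\<forall>i<m. cinner (q i) (q m) = 0)"
  have "cinner (q m) (q i) = 0" if "i < m" for i
    using * that by (simp add: cinner_commute[of "q m"])
  with * show "orthonormal_upto q (Suc m)"
    unfolding orthonormal_upto_def norm_eq_1_iff_cinner_self less_Suc_eq by auto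
qed

lemma cinner_sum_scale_orthonormal:
  assumes "orthonormal_upto q m" and "i < m"
  shows "cinner (q i) (\<Sum>l<m. y l *s q l) = y i"
proof -
  have "cinner (q i) (\<Sum>l<m. y l *s q l) = (\<Sum>l<m. if l = i then y i else 0)"
    using assms unfolding cinner_sum_right cinner_scale_right
    by (intro sum.cong refl) (auto simp: orthonormal_upto_def)
  also have "\<dots> = y i" using assms(2) by simp
  finally show ?thesis .
qed

lemma cinner_orth_proj:
  "orthonormal_upto q m \<Longrightarrow> i < m \<Longrightarrow> cinner (q i) (orth_proj q m v) = cinner (q i) v"
  unfolding orth_proj_def by (rule cinner_sum_scale_orthonormal)

lemma orth_proj_in_span: "orth_proj q m v \<in> vec.span (q ` {..<m})"
  unfolding orth_proj_def by (intro vec.span_sum vec.span_scale vec.span_base) auto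

lemma orth_proj_Suc: "orth_proj q (Suc m) v = orth_proj q m v + cinner (q m) v *s q m"
  by (simp add: orth_proj_def)

lemma orth_proj_add: "orth_proj q m (u + v) = orth_proj q m u + orth_proj q m v"
  unfolding orth_proj_def cinner_add_right vec.scale_left_distrib by (rule sum.distrib)

lemma orth_proj_scale: "orth_proj q m (c *s v) = c *s orth_proj q m v"
  by (simp only: orth_proj_def cinner_scale_right vec.scale_sum_right vec.scale_scale)

lemma orth_proj_diff: "orth_proj q m (u - v) = orth_proj q m u - orth_proj q m v"
  unfolding orth_proj_def cinner_diff_right vec.scale_left_diff_distrib by (rule sum_subtractf)

lemma orth_proj_basis:
  assumes "orthonormal_upto q m" and "l < m"
  shows "orth_proj q m (q l) = q l"
proof -
  have "orth_proj q m (q l) = (\<Sum>i<m. if i = l then q l else 0)"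
    unfolding orth_proj_def using assms by (intro sum.cong refl) (simp add: orthonormal_upto_def)
  also have "\<dots> = q l"
    using assms(2) by simp
  finally show ?thesis .
qed

lemma orth_proj_eq_self:
  assumes orth: "orthonormal_upto q m" and v: "v \<in> vec.span (q ` {..<m})"
  shows "orth_proj q m v = v"
  using v
proof (induction rule: vec.span_induct_alt)
  case base
  then show ?case by (simp add: orth_proj_def)
next
  case (step c x y)
  then show ?case
    using orth_proj_basis[OF orth] by (auto simp: orth_proj_add orth_proj_scale)
qed

lemma orthonormal_upto_notin_span:
  assumes "orthonormal_upto q (Suc m)"
  shows "q m \<notin> vec.span (q ` {..<m})"
proof
  have orth: "orthonormal_upto q m" and "norm (q m) = 1"
    and perp: "\<forall>i<m. cinner (q i) (q m) = 0"
    using assms unfolding orthonormal_upto_Suc by simp_all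
  assume "q m \<in> vec.span (q ` {..<m})"
  then have "q m = orth_proj q m (q m)"
    using orth_proj_eq_self[OF orth] by simp
  also have "\<dots> = 0"
    unfolding orth_proj_def using perp by (intro sum.neutral) simp
  finally show False
    using \<open>norm (q m) = 1\<close> by simp
qed

lemma span_insert_exchange:
  assumes "x \<in> vec.span (insert y S)" and "y \<in> vec.span (insert x S)"
  shows "vec.span (insert x S) = vec.span (insert y S)"
  unfolding vec.span_eq using assms vec.span_superset by blast

lemma span_insert_span: "vec.span (insert x (vec.span S)) = vec.span (insert x S)"
  by (simp add: vec.span_insert vec.span_span)

lemma gram_schmidt_step:
  fixes q :: "nat \<Rightarrow> complex^'n" and m :: nat and v :: "complex^'n"
  defines "w \<equiv> v - orth_proj q m v"
  assumes orth: "orthonormal_upto q m" and v: "v \<notin> vec.span (q ` {..<m})"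
    and qm: "q m = of_real (1 / norm w) *s w"
  shows "orthonormal_upto q (Suc m)"
    and "vec.span (q ` {..<Suc m}) = vec.span (insert v (q ` {..<m}))"
proof -
  have "w \<noteq> 0"
    using v orth_proj_in_span[of q m v] by (auto simp: w_def)
  have "cinner (q i) (q m) = 0" if "i < m" for i
    using orth that by (simp add: qm w_def cinner_scale_right cinner_diff_right cinner_orth_proj)
  moreover have "norm (q m) = 1"
    unfolding qm using \<open>w \<noteq> 0\<close> by (rule norm_normalize)
  ultimately show "orthonormal_upto q (Suc m)"
    using orth by (simp add: orthonormal_upto_Suc)
  have "orth_proj q m v \<in> vec.span (insert v (q ` {..<m}))"
    using vec.span_mono[OF subset_insertI] orth_proj_in_span by blast
  then have qm_span: "q m \<in> vec.span (insert v (q ` {..<m}))"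
    unfolding qm w_def using vec.span_base[OF insertI1] by (intro vec.span_scale vec.span_diff)
  have "orth_proj q m v \<in> vec.span (insert (q m) (q ` {..<m}))"
    using vec.span_mono[OF subset_insertI] orth_proj_in_span by blast
  then have "of_real (norm w) *s q m + orth_proj q m v \<in> vec.span (insert (q m) (q ` {..<m}))"
    using vec.span_base[OF insertI1] by (intro vec.span_add vec.span_scale)
  moreover have "of_real (norm w) *s q m + orth_proj q m v = v"
    using \<open>w \<noteq> 0\<close> by (simp add: qm scale_normalize w_def)
  ultimately have "v \<in> vec.span (insert (q m) (q ` {..<m}))"
    by (simp only:)
  then show "vec.span (q ` {..<Suc m}) = vec.span (insert v (q ` {..<m}))"
    unfolding lessThan_Suc image_insert by (rule span_insert_exchange[OF qm_span])
qed

lemma orthonormal_upto_expand_last: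
  assumes "orthonormal_upto q (Suc m)" and "u \<in> vec.span (q ` {..<Suc m})"
  shows "u = orth_proj q m u + cinner (q m) u *s q m"
  using assms by (simp add: orth_proj_eq_self flip: orth_proj_Suc)

lemma orthonormal_upto_last_component:
  assumes "orthonormal_upto q (Suc m)" and "u \<in> vec.span (q ` {..<Suc m})"
    and "\<forall>i<m. cinner (q i) u = 0"
  shows "u = cinner (q m) u *s q m"
proof -
  have "orth_proj q m u = 0"
    using assms(3) unfolding orth_proj_def by (intro sum.neutral) auto
  then show ?thesis
    using orthonormal_upto_expand_last[OF assms(1,2)] by simp
qed

lemma orthonormal_upto_split_last:
  fixes q :: "nat \<Rightarrow> complex^'n"
  assumes orth: "orthonormal_upto q (Suc m)" and u: "u \<in> vec.span (q ` {..<Suc m})"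
  shows "u - cinner (q m) u *s q m \<in> vec.span (q ` {..<m})"
    and "(norm u)\<^sup>2 = (norm (u - cinner (q m) u *s q m))\<^sup>2 + (cmod (cinner (q m) u))\<^sup>2"
proof -
  have u_eq: "u - cinner (q m) u *s q m = orth_proj q m u"
    using orthonormal_upto_expand_last[OF orth u] by (simp add: algebra_simps)
  then show "u - cinner (q m) u *s q m \<in> vec.span (q ` {..<m})"
    by (simp add: orth_proj_in_span)
  have "cinner (q m) (orth_proj q m u) = 0"
    using orth unfolding orth_proj_def orthonormal_upto_def
    by (simp add: cinner_sum_right cinner_scale_right)
  then have "cinner (orth_proj q m u) (cinner (q m) u *s q m) = 0"
    by (simp add: cinner_commute[of "orth_proj q m u"] cinner_scale_left)
  moreover have "norm (q m) = 1"
    using orth by (simp add: orthonormal_upto_Suc)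
  ultimately show "(norm u)\<^sup>2 = (norm (u - cinner (q m) u *s q m))\<^sup>2 + (cmod (cinner (q m) u))\<^sup>2"
    using norm_add_sq_orthogonal orthonormal_upto_expand_last[OF orth u]
    by (metis u_eq norm_scale_vec mult.right_neutral)
qed

section \<open>Krylov subspaces\<close>

definition krylov_vec :: "complex^'n^'n \<Rightarrow> complex^'n \<Rightarrow> nat \<Rightarrow> complex^'n" where
  "krylov_vec A b i = (((*v) A) ^^ i) b"

lemma krylov_vec_0 [simp]: "krylov_vec A b 0 = b"
  by (simp add: krylov_vec_def)

lemma krylov_vec_Suc [simp]: "krylov_vec A b (Suc i) = A *v krylov_vec A b i"
  by (simp add: krylov_vec_def)

lemma krylov_eq_span: "krylov A b j = vec.span (krylov_vec A b ` {..<j})"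
  unfolding krylov_def krylov_vec_def by (intro arg_cong[where f = vec.span]) auto

lemma krylov_subspace [simp]: "vec.subspace (krylov A b j)"
  by (simp add: krylov_eq_span)

lemma krylov_span [simp]: "vec.span (krylov A b j) = krylov A b j"
  by (simp add: vec.span_eq_iff)

lemma krylov_0: "krylov A b 0 = {0}"
  by (simp add: krylov_eq_span)

lemma krylov_Suc: "krylov A b (Suc j) = vec.span (insert (krylov_vec A b j) (krylov A b j))"
  by (simp add: krylov_eq_span lessThan_Suc vec.span_insert vec.span_span)

lemma krylov_vec_in_krylov: "i < j \<Longrightarrow> krylov_vec A b i \<in> krylov A b j"
  unfolding krylov_eq_span by (intro vec.span_base) auto

lemma vector_in_krylov: "1 \<le> j \<Longrightarrow> b \<in> krylov A b j"
  using krylov_vec_in_krylov[of 0 j A b] by simp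

lemma matrix_mult_in_krylov: "x \<in> krylov A b j \<Longrightarrow> A *v x \<in> krylov A b (Suc j)"
proof -
  assume "x \<in> krylov A b j"
  then have "A *v x \<in> vec.span ((*v) A ` krylov_vec A b ` {..<j})"
    by (simp add: krylov_eq_span vec.span_image)
  moreover have "(*v) A ` krylov_vec A b ` {..<j} \<subseteq> krylov_vec A b ` {..<Suc j}"
    by (auto simp flip: krylov_vec_Suc)
  ultimately show ?thesis
    unfolding krylov_eq_span using vec.span_mono by blast
qed

lemma residual_in_krylov: "x \<in> krylov A b j \<Longrightarrow> c *s b - A *v x \<in> krylov A b (Suc j)"
  by (intro vec.subspace_diff vec.subspace_scale krylov_subspace vector_in_krylov
      matrix_mult_in_krylov) simp_all

lemma krylov_vec_in_stationary_krylov: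
  assumes "krylov_vec A b j \<in> krylov A b j"
  shows "krylov_vec A b i \<in> krylov A b j"
proof (induction i)
  case 0
  then show ?case
    using assms by (cases j) (simp_all add: vector_in_krylov)
next
  case (Suc i)
  have "krylov A b (Suc j) = krylov A b j"
    using assms by (simp add: krylov_Suc vec.span_redundant)
  then show ?case
    using matrix_mult_in_krylov[OF Suc.IH] by simp
qed

lemma dim_krylov_le: "vec.dim (krylov A b j) \<le> j"
proof -
  have "vec.dim (krylov A b j) \<le> card (krylov_vec A b ` {..<j})"
    unfolding krylov_eq_span by (rule vec.dim_le_card) auto
  also have "\<dots> \<le> j"
    using card_image_le[of "{..<j}" "krylov_vec A b"] by simp
  finally show ?thesis .
qed

lemma krylov_vec_notin_krylov:
  assumes dim: "vec.dim (krylov A b (k + 1)) = k + 1" and "j \<le> k"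
  shows "krylov_vec A b j \<notin> krylov A b j"
proof
  assume "krylov_vec A b j \<in> krylov A b j"
  then have "krylov A b (k + 1) \<subseteq> krylov A b j"
    unfolding krylov_eq_span[of A b "k + 1"]
    by (intro vec.span_minimal) (auto simp: krylov_vec_in_stationary_krylov)
  then have "k + 1 \<le> j"
    using vec.dim_subset dim dim_krylov_le[of A b j] by (metis order_trans)
  then show False
    using \<open>j \<le> k\<close> by simp
qed

lemma krylov_Suc_Suc_eq:
  assumes "y \<in> krylov A b (Suc j)" and "y \<notin> krylov A b j"
  shows "krylov A b (Suc (Suc j)) = vec.span (insert (A *v y) (krylov A b (Suc j)))"
proof -
  obtain t where t: "y - t *s krylov_vec A b j \<in> krylov A b j"
    using assms(1) by (auto simp: krylov_Suc vec.span_breakdown_eq vec.span_eq_iff[THEN iffD2])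
  then have "t \<noteq> 0"
    using assms(2) by auto
  have r: "A *v y - t *s krylov_vec A b (Suc j) \<in> krylov A b (Suc j)"
    using matrix_mult_in_krylov[OF t] by (simp add: vec.diff vec.scale)
  have K_sub: "krylov A b (Suc j) \<subseteq> vec.span (insert x (krylov A b (Suc j)))" for x
    using vec.span_superset by blast
  have "(1 / t) *s (A *v y - (A *v y - t *s krylov_vec A b (Suc j)))
      \<in> vec.span (insert (A *v y) (krylov A b (Suc j)))"
    using vec.span_base[OF insertI1] K_sub r by (blast intro: vec.span_scale vec.span_diff)
  moreover have
    "(1 / t) *s (A *v y - (A *v y - t *s krylov_vec A b (Suc j))) = krylov_vec A b (Suc j)"
    using \<open>t \<noteq> 0\<close> by simp
  ultimately have "krylov_vec A b (Suc j) \<in> vec.span (insert (A *v y) (krylov A b (Suc j)))"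
    by (simp only:)
  moreover have "(A *v y - t *s krylov_vec A b (Suc j)) + t *s krylov_vec A b (Suc j)
      \<in> vec.span (insert (krylov_vec A b (Suc j)) (krylov A b (Suc j)))"
    using vec.span_base[OF insertI1] K_sub r by (blast intro: vec.span_scale vec.span_add)
  then have "A *v y \<in> vec.span (insert (krylov_vec A b (Suc j)) (krylov A b (Suc j)))"
    by simp
  ultimately show ?thesis
    unfolding krylov_Suc[of A b "Suc j"] by (rule span_insert_exchange)
qed

lemma matrix_mult_notin_krylov:
  assumes dim: "vec.dim (krylov A b (k + 1)) = k + 1" and "Suc j \<le> k"
    and "y \<in> krylov A b (Suc j)" and "y \<notin> krylov A b j"
  shows "A *v y \<notin> krylov A b (Suc j)"
proof
  assume "A *v y \<in> krylov A b (Suc j)"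
  then have "krylov A b (Suc (Suc j)) = krylov A b (Suc j)"
    using krylov_Suc_Suc_eq[OF assms(3,4)] by (simp add: vec.span_redundant)
  then show False
    using krylov_vec_in_krylov[of "Suc j" "Suc (Suc j)" A b] krylov_vec_notin_krylov[OF dim assms(2)]
    by simp
qed

lemma krylov_of_residual_in_krylov:
  assumes dim: "vec.dim (krylov A b (k + 1)) = k + 1" and "Suc j \<le> k"
    and y: "y \<in> krylov A b (Suc j)" and r: "c *s b - A *v y \<in> krylov A b (Suc j)"
  shows "y \<in> krylov A b j"
proof (rule ccontr)
  assume "y \<notin> krylov A b j"
  have "A *v y = c *s b - (c *s b - A *v y)"
    by simp
  also have "\<dots> \<in> krylov A b (Suc j)"
    using vec.subspace_scale[OF krylov_subspace vector_in_krylov, of "Suc j"]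
    by (intro vec.subspace_diff[OF krylov_subspace _ r]) simp
  finally show False
    using matrix_mult_notin_krylov[OF dim assms(2) y \<open>y \<notin> krylov A b j\<close>] by simp
qed

section \<open>The Arnoldi basis\<close>

lemma length_arnoldi_list: "length (arnoldi_list A b j) = Suc j"
  by (induction j) (simp_all add: Let_def)

lemma arnoldi_list_nth: "l \<le> j \<Longrightarrow> arnoldi_list A b j ! l = arnoldi_q A b l"
proof (induction j)
  case 0
  then show ?case by (simp add: arnoldi_q_def)
next
  case (Suc j)
  then show ?case
    by (cases "l = Suc j") (simp_all add: arnoldi_q_def Let_def nth_append length_arnoldi_list)
qed

lemma arnoldi_q_0: "arnoldi_q A b 0 = of_real (1 / norm b) *s b"
  by (simp add: arnoldi_q_def)

lemma arnoldi_q_Suc: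
  "arnoldi_q A b (Suc j) =
     (let w = A *v arnoldi_q A b j - orth_proj (arnoldi_q A b) (Suc j) (A *v arnoldi_q A b j)
      in of_real (1 / norm w) *s w)"
proof -
  let ?qs = "arnoldi_list A b j"
  define w where "w = A *v last ?qs - (\<Sum>i<length ?qs. cinner (?qs ! i) (A *v last ?qs) *s ?qs ! i)"
  have "arnoldi_list A b (Suc j) = ?qs @ [of_real (1 / norm w) *s w]"
    by (simp only: arnoldi_list.simps Let_def w_def)
  then have "arnoldi_q A b (Suc j) = of_real (1 / norm w) *s w"
    unfolding arnoldi_q_def using length_arnoldi_list[of A b j] by (metis nth_append_length)
  moreover have last: "last ?qs = arnoldi_q A b j"
    using arnoldi_list_nth[of j j A b] length_arnoldi_list[of A b j] by (subst last_conv_nth) auto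
  then have "w = A *v arnoldi_q A b j - orth_proj (arnoldi_q A b) (Suc j) (A *v arnoldi_q A b j)"
    unfolding w_def orth_proj_def length_arnoldi_list
    by (intro arg_cong2[where f = minus] refl sum.cong) (simp_all add: arnoldi_list_nth)
  ultimately show ?thesis
    by (simp only: Let_def)
qed

lemma cinner_arnoldi_q_matrix_mult_sum:
  "cinner (arnoldi_q A b i) (A *v (\<Sum>l<m. y l *s arnoldi_q A b l))
     = (\<Sum>l<m. arnoldi_h A b i l * y l)"
  by (simp add: vec.sum vec.scale cinner_sum_right cinner_scale_right arnoldi_h_def mult.commute)

locale arnoldi_no_breakdown =
  fixes A :: "complex^'n^'n" and b :: "complex^'n" and k :: nat
  assumes b_nonzero: "b \<noteq> 0"
    and dim_krylov: "vec.dim (krylov A b (k + 1)) = k + 1"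
begin

abbreviation q :: "nat \<Rightarrow> complex^'n" where
  "q \<equiv> arnoldi_q A b"

lemma arnoldi_invariant:
  "j \<le> k \<Longrightarrow> orthonormal_upto q (Suc j) \<and> (\<forall>m\<le>Suc j. vec.span (q ` {..<m}) = krylov A b m)"
proof (induction j)
  case 0
  have "norm (q 0) = 1"
    unfolding arnoldi_q_0 using b_nonzero by (rule norm_normalize)
  moreover have "vec.span {q 0} = vec.span {b}"
    using b_nonzero scale_normalize[of b]
    by (intro span_insert_exchange) (metis arnoldi_q_0 insertI1 vec.span_base vec.span_scale)+
  ultimately show ?case
    by (auto simp: orthonormal_upto_def norm_eq_1_iff_cinner_self le_Suc_eq krylov_0 krylov_eq_span
        lessThan_Suc)
next
  case (Suc j)
  then have orth: "orthonormal_upto q (Suc j)"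
    and span: "\<forall>m\<le>Suc j. vec.span (q ` {..<m}) = krylov A b m"
    by simp_all
  have "q j \<in> krylov A b (Suc j)"
    using span by (metis le_refl lessI lessThan_iff image_eqI vec.span_base)
  moreover have "q j \<notin> krylov A b j"
    using orthonormal_upto_notin_span[OF orth] span by simp
  ultimately have Aq: "A *v q j \<notin> vec.span (q ` {..<Suc j})"
    using matrix_mult_notin_krylov[OF dim_krylov Suc.prems] span by simp
  have "orthonormal_upto q (Suc (Suc j))"
    and "vec.span (q ` {..<Suc (Suc j)}) = vec.span (insert (A *v q j) (q ` {..<Suc j}))"
    using gram_schmidt_step[OF orth Aq arnoldi_q_Suc[unfolded Let_def]] by simp_all
  moreover have "vec.span (insert (A *v q j) (q ` {..<Suc j})) = krylov A b (Suc (Suc j))"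
    using krylov_Suc_Suc_eq[OF \<open>q j \<in> _\<close> \<open>q j \<notin> _\<close>] span
    by (metis order_refl span_insert_span)
  ultimately show ?case
    using span by (simp add: le_Suc_eq)
qed

lemma orthonormal_arnoldi_q: "m \<le> Suc k \<Longrightarrow> orthonormal_upto q m"
  using arnoldi_invariant[of k] orthonormal_upto_mono by blast

lemma span_arnoldi_q: "m \<le> Suc k \<Longrightarrow> vec.span (q ` {..<m}) = krylov A b m"
  using arnoldi_invariant[of k] by simp

lemma arnoldi_combination_in_krylov: "m \<le> Suc k \<Longrightarrow> (\<Sum>l<m. y l *s q l) \<in> krylov A b m"
  by (auto simp flip: span_arnoldi_q intro: vec.span_sum vec.span_scale vec.span_base)

lemma cinner_arnoldi_q_vector:
  "i \<le> k \<Longrightarrow> cinner (q i) b = (if i = 0 then of_real (norm b) else 0)"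
proof -
  assume "i \<le> k"
  then have "cinner (q i) (q 0) = (if i = 0 then 1 else 0)"
    using orthonormal_arnoldi_q[of "Suc k"] by (simp add: orthonormal_upto_def)
  moreover have "b = of_real (norm b) *s q 0"
    using b_nonzero by (simp add: arnoldi_q_0 scale_normalize)
  ultimately show ?thesis
    by (metis cinner_scale_right mult_zero_right mult.right_neutral)
qed

section \<open>The FOM iterate\<close>

lemma arnoldi_coordinates:
  "m \<le> Suc k \<Longrightarrow> v \<in> krylov A b m \<Longrightarrow> v = (\<Sum>l<m. cinner (q l) v *s q l)"
  using orth_proj_eq_self[OF orthonormal_arnoldi_q] span_arnoldi_q unfolding orth_proj_def by metis

lemma cinner_arnoldi_q_matrix_mult:
  assumes "m \<le> Suc k" and "v \<in> krylov A b m"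
  shows "cinner (q i) (A *v v) = (\<Sum>l<m. arnoldi_h A b i l * cinner (q l) v)"
  by (subst arnoldi_coordinates[OF assms]) (rule cinner_arnoldi_q_matrix_mult_sum)

text \<open>In the basis q_0, ..., q_(j-1) the Galerkin operator G v = P_j (A v), with P_j the
  orthogonal projection onto K_j, has matrix H_j; so G is injective on K_j, hence by dimension
  maps K_j onto itself, and in particular hits b.\<close>
lemma hessenberg_system_solvable:
  assumes "j \<le> k" and ns: "H_nonsingular A b j"
  shows "\<exists>y. \<forall>i<j. (\<Sum>l<j. arnoldi_h A b i l * y l) = (if i = 0 then 1 else 0)"
proof (cases "j = 0")
  case False
  define G where "G v = orth_proj q j (A *v v)" for v
  have orth: "orthonormal_upto q j" and K: "vec.span (q ` {..<j}) = krylov A b j"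
    using assms by (simp_all add: orthonormal_arnoldi_q span_arnoldi_q)
  have cinner_G: "cinner (q i) (G v) = (\<Sum>l<j. arnoldi_h A b i l * cinner (q l) v)"
    if "i < j" and "v \<in> krylov A b j" for i v
  proof -
    have "cinner (q i) (G v) = cinner (q i) (A *v v)"
      unfolding G_def using orth \<open>i < j\<close> by (rule cinner_orth_proj)
    also have "\<dots> = (\<Sum>l<j. arnoldi_h A b i l * cinner (q l) v)"
      using assms(1) \<open>v \<in> krylov A b j\<close> by (intro cinner_arnoldi_q_matrix_mult) simp_all
    finally show ?thesis .
  qed
  have "G (u + v) = G u + G v" and "G (c *s v) = c *s G v" for c u v
    by (simp_all only: G_def matrix_vector_right_distrib vec.scale orth_proj_add orth_proj_scale)
  then have lin: "Vector_Spaces.linear (*s) (*s) G"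
    unfolding Vector_Spaces.linear_iff using vec.vector_space_axioms by blast
  have G_eq_0: "v = 0" if v: "v \<in> krylov A b j" and "G v = 0" for v
  proof -
    have "\<forall>i<j. (\<Sum>l<j. arnoldi_h A b i l * cinner (q l) v) = 0"
      using cinner_G[OF _ v] \<open>G v = 0\<close> by simp
    then have "\<forall>l<j. cinner (q l) v = 0"
      using ns unfolding H_nonsingular_def by (elim allE[where x = "\<lambda>l. cinner (q l) v"]) simp
    then show "v = 0"
      using arnoldi_coordinates[of j v] v assms(1) by simp
  qed
  have "inj_on G (krylov A b j)"
  proof (rule inj_onI)
    fix u v assume "u \<in> krylov A b j" "v \<in> krylov A b j" "G u = G v"
    then have "G (u - v) = 0" and "u - v \<in> krylov A b j"
      by (simp_all add: G_def matrix_vector_mult_diff_distrib orth_proj_diff vec.subspace_diff)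
    then show "u = v"
      using G_eq_0[of "u - v"] by simp
  qed
  have "G ` krylov A b j = krylov A b j"
  proof (rule vec.subspace_dim_equal)
    show "vec.subspace (G ` krylov A b j)"
      using lin by (rule vec.linear_subspace_image) simp
    show "G ` krylov A b j \<subseteq> krylov A b j"
      using K orth_proj_in_span by (auto simp: G_def)
    show "vec.dim (krylov A b j) \<le> vec.dim (G ` krylov A b j)"
      using vec.dim_image_eq[OF lin] \<open>inj_on G (krylov A b j)\<close> by simp
  qed simp
  moreover have "b \<in> krylov A b j"
    using False by (simp add: vector_in_krylov)
  ultimately obtain v where v: "v \<in> krylov A b j" and Gv: "G v = b"
    by (metis imageE)
  have "(\<Sum>l<j. arnoldi_h A b i l * (cinner (q l) v / of_real (norm b))) = (if i = 0 then 1 else 0)"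
    if "i < j" for i
  proof -
    have "(\<Sum>l<j. arnoldi_h A b i l * (cinner (q l) v / of_real (norm b)))
        = (\<Sum>l<j. arnoldi_h A b i l * cinner (q l) v) / of_real (norm b)"
      by (simp only: times_divide_eq_right sum_divide_distrib)
    also have "\<dots> = cinner (q i) b / of_real (norm b)"
      using cinner_G[OF that v] by (simp only: Gv)
    also have "\<dots> = (if i = 0 then 1 else 0)"
      using cinner_arnoldi_q_vector[of i] that assms(1) b_nonzero by simp
    finally show ?thesis .
  qed
  then show ?thesis
    by (intro exI[of _ "\<lambda>l. cinner (q l) v / of_real (norm b)"]) simp
qed simp

lemma fom_coeffs_solve:
  assumes "j \<le> k" and ns: "H_nonsingular A b j"
  shows "\<forall>i<j. (\<Sum>l<j. arnoldi_h A b i l * fom_coeffs A b j l) = (if i = 0 then 1 else 0)"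
proof -
  let ?P = "\<lambda>y. (\<forall>l\<ge>j. y l = 0) \<and>
    (\<forall>i<j. (\<Sum>l<j. arnoldi_h A b i l * y l) = (if i = 0 then 1 else 0))"
  obtain y where y: "\<forall>i<j. (\<Sum>l<j. arnoldi_h A b i l * y l) = (if i = 0 then 1 else 0)"
    using hessenberg_system_solvable[OF assms] by blast
  define Y where "Y l = (if l < j then y l else 0)" for l
  have PY: "?P Y"
    using y by (simp add: Y_def)
  have uniq: "z = Y" if Pz: "?P z" for z
  proof -
    have "\<forall>i<j. (\<Sum>l<j. arnoldi_h A b i l * (z l - Y l)) = 0"
      using Pz PY by (simp add: right_diff_distrib sum_subtractf)
    then have "\<forall>l<j. z l - Y l = 0"
      using ns unfolding H_nonsingular_def by (elim allE[where x = "\<lambda>l. z l - Y l"]) simp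
    with Pz PY show "z = Y"
      by (metis eq_iff_diff_eq_0 not_less ext)
  qed
  have "?P (fom_coeffs A b j)"
    unfolding fom_coeffs_def by (rule theI[of ?P Y, OF PY uniq])
  then show ?thesis by blast
qed

lemma fom_iterate_in_krylov: "j \<le> Suc k \<Longrightarrow> fom_iterate A b j \<in> krylov A b j"
  unfolding fom_iterate_def by (intro vec.subspace_scale krylov_subspace arnoldi_combination_in_krylov)

lemma fom_residual_orthogonal:
  assumes "j \<le> k" and "H_nonsingular A b j" and "i < j"
  shows "cinner (q i) (b - A *v fom_iterate A b j) = 0"
  using fom_coeffs_solve[OF assms(1,2)] cinner_arnoldi_q_vector[of i] assms
  by (simp add: fom_iterate_def cinner_diff_right vec.scale cinner_scale_right
      cinner_arnoldi_q_matrix_mult_sum)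

lemma fom_residual_eq:
  assumes "j \<le> k" and "H_nonsingular A b j"
  shows "b - A *v fom_iterate A b j = cinner (q j) (b - A *v fom_iterate A b j) *s q j"
proof (rule orthonormal_upto_last_component)
  show "orthonormal_upto q (Suc j)"
    using assms by (simp add: orthonormal_arnoldi_q)
  have "1 *s b - A *v fom_iterate A b j \<in> krylov A b (Suc j)"
    using assms by (intro residual_in_krylov fom_iterate_in_krylov) simp
  then show "b - A *v fom_iterate A b j \<in> vec.span (q ` {..<Suc j})"
    using assms by (simp add: span_arnoldi_q)
  show "\<forall>i<j. cinner (q i) (b - A *v fom_iterate A b j) = 0"
    using fom_residual_orthogonal[OF assms] by blast
qed

end

section \<open>Residual bound\<close>

lemma sqrt_mult_add_sqrt_mult_le:
  fixes a b s t :: real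
  assumes "0 \<le> a" "0 \<le> b" "0 \<le> s" "0 \<le> t"
  shows "sqrt (a * s) + sqrt (b * t) \<le> sqrt ((a + b) * (s + t))"
proof (rule real_le_rsqrt)
  have "sqrt (a * s) * sqrt (b * t) = sqrt ((a * t) * (b * s))"
    by (simp add: real_sqrt_mult [symmetric] mult_ac)
  also have "\<dots> \<le> (a * t + b * s) / 2"
    using assms by (intro arith_geo_mean_sqrt) simp_all
  finally show "(sqrt (a * s) + sqrt (b * t))\<^sup>2 \<le> (a + b) * (s + t)"
    using assms by (simp add: power2_sum algebra_simps)
qed

lemma residual_bound_imp_pos:
  assumes "\<And>c x. x \<in> krylov A b j \<Longrightarrow> (cmod c)\<^sup>2 \<le> (norm (c *s b - A *v x))\<^sup>2 * S"
  shows "0 < S"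
proof -
  have "1 \<le> (norm b)\<^sup>2 * S"
    using assms[of 0 1] by (simp add: vec.subspace_0)
  show ?thesis
  proof (rule ccontr)
    assume "\<not> 0 < S"
    then have "(norm b)\<^sup>2 * S \<le> 0"
      by (simp add: mult_nonneg_nonpos)
    with \<open>1 \<le> (norm b)\<^sup>2 * S\<close> show False
      by simp
  qed
qed

text \<open>The sum of the weights up to j bounds 1 / norm (b - A x)^2 for every x in K_j,
  with equality for the GMRES iterate.\<close>
definition fom_weight :: "complex^'n^'n \<Rightarrow> complex^'n \<Rightarrow> nat \<Rightarrow> real" where
  "fom_weight A b j =
     (if H_nonsingular A b j then 1 / (norm (b - A *v fom_iterate A b j))\<^sup>2 else 0)"

lemma fom_weight_0: "fom_weight A b 0 = 1 / (norm b)\<^sup>2"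
  by (simp add: fom_weight_def H_nonsingular_def fom_iterate_def)

lemma exists_atMost_ge_average:
  fixes g :: "nat \<Rightarrow> real"
  shows "\<exists>j\<le>k. (\<Sum>i\<le>k. g i) \<le> real (Suc k) * g j"
proof -
  have "Max (g ` {..k}) \<in> g ` {..k}"
    by (rule Max_in) auto
  then obtain j where "j \<le> k" and j: "Max (g ` {..k}) = g j"
    by (auto simp del: Max_in)
  have "(\<Sum>i\<le>k. g i) \<le> of_nat (card {..k}) * Max (g ` {..k})"
    by (rule sum_bounded_above) simp
  then show ?thesis
    using \<open>j \<le> k\<close> j by auto
qed

lemma matrix_inv_mult_cancel:
  fixes A :: "'a::field^'n^'n"
  assumes "invertible A"
  shows "matrix_inv A *v (A *v x) = x" and "A *v (matrix_inv A *v x) = x"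
proof -
  have "A ** matrix_inv A = mat 1 \<and> matrix_inv A ** A = mat 1"
    using assms unfolding invertible_def matrix_inv_def by (rule someI_ex)
  then show "matrix_inv A *v (A *v x) = x" and "A *v (matrix_inv A *v x) = x"
    by (simp_all add: matrix_vector_mul_assoc)
qed

locale invertible_arnoldi_no_breakdown = arnoldi_no_breakdown +
  assumes invertible: "invertible A"
begin

text \<open>A kernel vector y of H_j gives v = sum y_l q_l in K_j with A v orthogonal to K_j,
  hence a multiple of q_j, and a nonzero one since A is injective.\<close>
lemma arnoldi_q_in_image_if_singular:
  assumes "j \<le> k" and "\<not> H_nonsingular A b j"
  shows "\<exists>v\<in>krylov A b j. A *v v = q j"
proof -
  obtain y l0 where y: "\<forall>i<j. (\<Sum>l<j. arnoldi_h A b i l * y l) = 0" and "l0 < j" "y l0 \<noteq> 0"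
    using assms(2) unfolding H_nonsingular_def by blast
  define v where "v = (\<Sum>l<j. y l *s q l)"
  have v: "v \<in> krylov A b j"
    unfolding v_def using assms(1) by (simp add: arnoldi_combination_in_krylov)
  have "cinner (q l0) v = y l0"
    unfolding v_def using orthonormal_arnoldi_q[of j] assms(1) \<open>l0 < j\<close>
    by (simp add: cinner_sum_scale_orthonormal)
  then have "v \<noteq> 0"
    using \<open>y l0 \<noteq> 0\<close> by auto
  then have "A *v v \<noteq> 0"
    using matrix_inv_mult_cancel(1)[OF invertible, of v] by force
  define \<phi> where "\<phi> = cinner (q j) (A *v v)"
  have Av: "A *v v = \<phi> *s q j"
    unfolding \<phi>_def
  proof (rule orthonormal_upto_last_component)
    show "orthonormal_upto q (Suc j)"
      using assms by (simp add: orthonormal_arnoldi_q)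
    show "A *v v \<in> vec.span (q ` {..<Suc j})"
      using assms(1) matrix_mult_in_krylov[OF v] by (simp add: span_arnoldi_q)
    show "\<forall>i<j. cinner (q i) (A *v v) = 0"
      using y by (simp add: v_def cinner_arnoldi_q_matrix_mult_sum)
  qed
  then have "\<phi> \<noteq> 0"
    using \<open>A *v v \<noteq> 0\<close> by auto
  then have "A *v ((1 / \<phi>) *s v) = q j"
    by (simp add: vec.scale Av)
  moreover have "(1 / \<phi>) *s v \<in> krylov A b j"
    using v by (simp add: vec.subspace_scale)
  ultimately show ?thesis by blast
qed

lemma residual_bound_Suc_singular:
  assumes "Suc j \<le> k" and "\<not> H_nonsingular A b (Suc j)"
    and IH: "\<And>c x. x \<in> krylov A b j \<Longrightarrow> (cmod c)\<^sup>2 \<le> (norm (c *s b - A *v x))\<^sup>2 * S"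
    and x: "x \<in> krylov A b (Suc j)"
  shows "(cmod c)\<^sup>2 \<le> (norm (c *s b - A *v x))\<^sup>2 * S"
proof -
  define p where "p = c *s b - A *v x"
  define \<beta> where "\<beta> = cinner (q (Suc j)) p"
  have "p \<in> vec.span (q ` {..<Suc (Suc j)})"
    using assms(1) residual_in_krylov[OF x] by (simp add: p_def span_arnoldi_q)
  then have p': "p - \<beta> *s q (Suc j) \<in> krylov A b (Suc j)"
    and norm_p: "(norm p)\<^sup>2 = (norm (p - \<beta> *s q (Suc j)))\<^sup>2 + (cmod \<beta>)\<^sup>2"
    using orthonormal_upto_split_last[OF orthonormal_arnoldi_q] assms(1)
    by (simp_all add: \<beta>_def span_arnoldi_q)
  obtain v where v: "v \<in> krylov A b (Suc j)" "A *v v = q (Suc j)"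
    using arnoldi_q_in_image_if_singular assms(1,2) by blast
  have p'_eq: "p - \<beta> *s q (Suc j) = c *s b - A *v (x + \<beta> *s v)"
    by (simp add: p_def v(2) matrix_vector_right_distrib vec.scale)
  moreover have "x + \<beta> *s v \<in> krylov A b (Suc j)"
    using x v(1) by (simp add: vec.subspace_add vec.subspace_scale)
  ultimately have "x + \<beta> *s v \<in> krylov A b j"
    using p' krylov_of_residual_in_krylov[OF dim_krylov assms(1)] by simp
  then have "(cmod c)\<^sup>2 \<le> (norm (p - \<beta> *s q (Suc j)))\<^sup>2 * S"
    unfolding p'_eq by (rule IH)
  also have "\<dots> \<le> (norm p)\<^sup>2 * S"
  proof -
    have "0 < S"
      using IH by (rule residual_bound_imp_pos)
    then show ?thesis
      using norm_p by (intro mult_right_mono) simp_all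
  qed
  finally show ?thesis
    by (simp add: p_def)
qed

text \<open>The FOM residual r is phi q_(j+1) with phi \<noteq> 0. Removing the q_(j+1)-component
  beta q_(j+1) = u r of the residual p = c b - A x leaves the residual (c - u) b - A (x - u x^F)
  of a vector of K_j, bounded by the induction hypothesis; then
  cmod c \<le> cmod (c - u) + cmod u and Cauchy-Schwarz in R^2 give the bound.\<close>
lemma residual_bound_Suc_nonsingular:
  assumes "Suc j \<le> k" and ns: "H_nonsingular A b (Suc j)"
    and IH: "\<And>c x. x \<in> krylov A b j \<Longrightarrow> (cmod c)\<^sup>2 \<le> (norm (c *s b - A *v x))\<^sup>2 * S"
    and x: "x \<in> krylov A b (Suc j)"
  shows "(cmod c)\<^sup>2 \<le> (norm (c *s b - A *v x))\<^sup>2 * (S + fom_weight A b (Suc j))"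
proof -
  define p where "p = c *s b - A *v x"
  define \<beta> where "\<beta> = cinner (q (Suc j)) p"
  define p' where "p' = p - \<beta> *s q (Suc j)"
  have "p \<in> vec.span (q ` {..<Suc (Suc j)})"
    using assms(1) residual_in_krylov[OF x] by (simp add: p_def span_arnoldi_q)
  then have p': "p' \<in> krylov A b (Suc j)" and norm_p: "(norm p)\<^sup>2 = (norm p')\<^sup>2 + (cmod \<beta>)\<^sup>2"
    using orthonormal_upto_split_last[OF orthonormal_arnoldi_q] assms(1)
    by (simp_all add: p'_def \<beta>_def span_arnoldi_q)
  define xF where "xF = fom_iterate A b (Suc j)"
  define \<phi> where "\<phi> = cinner (q (Suc j)) (b - A *v xF)"
  have xF: "xF \<in> krylov A b (Suc j)"
    using assms(1) by (simp add: xF_def fom_iterate_in_krylov)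
  have r: "b - A *v xF = \<phi> *s q (Suc j)"
    unfolding xF_def \<phi>_def using assms(1) ns by (rule fom_residual_eq)
  have "norm (q (Suc j)) = 1"
    using orthonormal_arnoldi_q[of "Suc (Suc j)"] assms(1) by (simp add: orthonormal_upto_Suc)
  then have weight: "fom_weight A b (Suc j) = 1 / (cmod \<phi>)\<^sup>2"
    using ns r by (simp add: fom_weight_def xF_def norm_scale_vec)
  have "\<phi> \<noteq> 0"
  proof
    assume "\<phi> = 0"
    then have "1 *s b - A *v xF \<in> krylov A b (Suc j)"
      using r by (simp add: vec.subspace_0)
    then have "xF \<in> krylov A b j"
      by (rule krylov_of_residual_in_krylov[OF dim_krylov assms(1) xF])
    then show False
      using IH[of xF 1] r \<open>\<phi> = 0\<close> by simp
  qed
  define u where "u = \<beta> / \<phi>"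
  have "\<beta> *s q (Suc j) = u *s (b - A *v xF)"
    using \<open>\<phi> \<noteq> 0\<close> by (simp add: r u_def)
  then have p'_eq: "p' = (c - u) *s b - A *v (x - u *s xF)"
    by (simp add: p'_def p_def matrix_vector_mult_diff_distrib vec.scale vec.scale_left_diff_distrib
        vec.scale_right_diff_distrib)
  have "x - u *s xF \<in> krylov A b (Suc j)"
    using x xF by (simp add: vec.subspace_diff vec.subspace_scale)
  then have "x - u *s xF \<in> krylov A b j"
    by (rule krylov_of_residual_in_krylov[OF dim_krylov assms(1) _ p'[unfolded p'_eq]])
  then have IH': "(cmod (c - u))\<^sup>2 \<le> (norm p')\<^sup>2 * S"
    unfolding p'_eq by (rule IH)
  have S: "0 < S"
    using IH by (rule residual_bound_imp_pos)
  have "sqrt ((cmod u)\<^sup>2 * (cmod \<phi>)\<^sup>2 * (1 / (cmod \<phi>)\<^sup>2)) = cmod u"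
    using \<open>\<phi> \<noteq> 0\<close> by simp
  then have "cmod c \<le> sqrt ((norm p')\<^sup>2 * S) + sqrt ((cmod u)\<^sup>2 * (cmod \<phi>)\<^sup>2 * (1 / (cmod \<phi>)\<^sup>2))"
    using norm_triangle_ineq[of "c - u" u] real_le_rsqrt[OF IH'] by simp
  also have "\<dots> \<le> sqrt (((norm p')\<^sup>2 + (cmod u)\<^sup>2 * (cmod \<phi>)\<^sup>2) * (S + 1 / (cmod \<phi>)\<^sup>2))"
    using S by (intro sqrt_mult_add_sqrt_mult_le) simp_all
  also have "(norm p')\<^sup>2 + (cmod u)\<^sup>2 * (cmod \<phi>)\<^sup>2 = (norm p)\<^sup>2"
    using norm_p \<open>\<phi> \<noteq> 0\<close> by (simp add: u_def norm_divide power_divide)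
  finally have "cmod c \<le> sqrt ((norm p)\<^sup>2 * (S + fom_weight A b (Suc j)))"
    by (simp only: weight)
  then have "(cmod c)\<^sup>2 \<le> (sqrt ((norm p)\<^sup>2 * (S + fom_weight A b (Suc j))))\<^sup>2"
    by (rule power_mono) simp
  also have "\<dots> = (norm p)\<^sup>2 * (S + fom_weight A b (Suc j))"
    using S weight by simp
  finally show ?thesis
    by (simp add: p_def)
qed

lemma residual_bound:
  "j \<le> k \<Longrightarrow> x \<in> krylov A b j \<Longrightarrow>
    (cmod c)\<^sup>2 \<le> (norm (c *s b - A *v x))\<^sup>2 * (\<Sum>i\<le>j. fom_weight A b i)"
proof (induction j arbitrary: c x)
  case 0
  then have "x = 0"
    by (simp add: krylov_0)
  then show ?case
    using b_nonzero by (simp add: fom_weight_0 norm_scale_vec power_mult_distrib)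
next
  case (Suc j)
  have IH: "\<And>c x. x \<in> krylov A b j \<Longrightarrow>
      (cmod c)\<^sup>2 \<le> (norm (c *s b - A *v x))\<^sup>2 * (\<Sum>i\<le>j. fom_weight A b i)"
    using Suc by simp
  show ?case
  proof (cases "H_nonsingular A b (Suc j)")
    case True
    then show ?thesis
      using residual_bound_Suc_nonsingular[OF Suc.prems(1) True IH Suc.prems(2)] by simp
  next
    case False
    then show ?thesis
      using residual_bound_Suc_singular[OF Suc.prems(1) False IH Suc.prems(2)]
      by (simp add: fom_weight_def)
  qed
qed

lemma exists_small_fom_residual:
  assumes "x \<in> krylov A b k"
  shows "\<exists>j\<le>k. H_nonsingular A b j \<and>
    norm (b - A *v fom_iterate A b j) \<le> sqrt (real (k + 1)) * norm (b - A *v x)"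
proof -
  obtain j where "j \<le> k" and avg: "(\<Sum>i\<le>k. fom_weight A b i) \<le> real (Suc k) * fom_weight A b j"
    using exists_atMost_ge_average by blast
  have "1 \<le> (norm (b - A *v x))\<^sup>2 * (\<Sum>i\<le>k. fom_weight A b i)"
    using residual_bound[of k x 1] assms by simp
  also have "\<dots> \<le> (norm (b - A *v x))\<^sup>2 * (real (Suc k) * fom_weight A b j)"
    using avg by (rule mult_left_mono) simp
  finally have one: "1 \<le> real (Suc k) * (norm (b - A *v x))\<^sup>2 * fom_weight A b j"
    by (simp add: mult_ac)
  then have ns: "H_nonsingular A b j"
    by (auto simp: fom_weight_def split: if_splits)
  let ?r = "norm (b - A *v fom_iterate A b j)"
  have "?r \<noteq> 0"
    using one ns by (auto simp: fom_weight_def)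
  then have "?r\<^sup>2 \<le> real (Suc k) * (norm (b - A *v x))\<^sup>2"
    using one ns by (simp add: fom_weight_def field_simps)
  then have "?r \<le> sqrt (real (Suc k) * (norm (b - A *v x))\<^sup>2)"
    by (rule real_le_rsqrt)
  then show ?thesis
    using \<open>j \<le> k\<close> ns by (auto simp: real_sqrt_mult)
qed

end

section \<open>Error bound\<close>

lemma subspace_vec_span: "subspace (vec.span (S :: (complex^'n) set))"
proof -
  have "c *\<^sub>R x = of_real c *s x" for c :: real and x :: "complex^'n"
    by (simp add: vec_eq_iff of_real_def)
  then show ?thesis
    unfolding subspace_def by (simp add: vec.span_zero vec.span_add vec.span_scale)
qed

lemma gmres_iterate_in_krylov: "gmres_iterate A b j \<in> krylov A b j"
proof -
  let ?W = "(*v) A ` krylov A b j"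
  have "closed ?W"
    unfolding krylov_eq_span vec.span_image[symmetric] by (rule closed_subspace[OF subspace_vec_span])
  moreover have "?W \<noteq> {}"
    using vec.subspace_0[OF krylov_subspace] by blast
  ultimately obtain w where "w \<in> ?W" and "\<And>y. y \<in> ?W \<Longrightarrow> dist b w \<le> dist b y"
    using distance_attains_inf by blast
  then obtain x where "x \<in> krylov A b j" "\<forall>z\<in>krylov A b j. norm (b - A *v x) \<le> norm (b - A *v z)"
    by (auto simp: dist_norm)
  then show ?thesis
    unfolding gmres_iterate_def by (rule someI2[where Q = "\<lambda>x. x \<in> krylov A b j", OF conjI]) blast+
qed

lemma norm_matrix_vector_le: "norm (M *v x) \<le> mat_norm2 M * norm (x::complex^'n)"
  unfolding mat_norm2_def by (rule onorm[OF matrix_vector_mul_bounded_linear])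

lemma mat_norm2_nonneg: "0 \<le> mat_norm2 M"
  unfolding mat_norm2_def by (rule onorm_pos_le[OF matrix_vector_mul_bounded_linear])

lemma fom_error_nonsingular:
  "H_nonsingular A b j \<Longrightarrow> fom_error A b j = ereal (norm (matrix_inv A *v b - fom_iterate A b j))"
  by (simp add: fom_error_def fom_iterate_def)

lemma fom_error_le_of_residual_le:
  assumes "invertible A" and "H_nonsingular A b j" and "0 \<le> C"
    and res: "norm (b - A *v fom_iterate A b j) \<le> C * norm (b - A *v x)"
  shows "fom_error A b j \<le> ereal (C * kappa A * norm (matrix_inv A *v b - x))"
proof -
  let ?e = "matrix_inv A *v b - x"
  have "matrix_inv A *v b - fom_iterate A b j = matrix_inv A *v (b - A *v fom_iterate A b j)"
    and "b - A *v x = A *v ?e"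
    using assms(1) by (simp_all add: matrix_vector_mult_diff_distrib matrix_inv_mult_cancel)
  then have "norm (matrix_inv A *v b - fom_iterate A b j)
      \<le> mat_norm2 (matrix_inv A) * (C * (mat_norm2 A * norm ?e))"
    using norm_matrix_vector_le[of "matrix_inv A"] norm_matrix_vector_le[of A ?e] res
      mat_norm2_nonneg[of "matrix_inv A"] \<open>0 \<le> C\<close>
    by (smt (verit) mult_left_mono)
  then show ?thesis
    using assms(2) by (simp add: fom_error_nonsingular kappa_def mult_ac)
qed

theorem mainTheorem4:
  fixes A :: "complex^'n^'n" and b :: "complex^'n" and k :: nat
  assumes "invertible A"
    and "b \<noteq> 0"
    and "k \<ge> 1"
    and "vec.dim (krylov A b (k + 1)) = k + 1"
  shows "Min (fom_error A b ` {0..k})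
           \<le> ereal (sqrt (real (k + 1)) * kappa A * norm (matrix_inv A *v b - gmres_iterate A b k))"
proof -
  interpret invertible_arnoldi_no_breakdown A b k
    using assms by unfold_locales
  obtain j where "j \<le> k" and ns: "H_nonsingular A b j"
    and "norm (b - A *v fom_iterate A b j)
      \<le> sqrt (real (k + 1)) * norm (b - A *v gmres_iterate A b k)"
    using exists_small_fom_residual[OF gmres_iterate_in_krylov] by blast
  then have "fom_error A b j
      \<le> ereal (sqrt (real (k + 1)) * kappa A * norm (matrix_inv A *v b - gmres_iterate A b k))"
    using assms(1) by (intro fom_error_le_of_residual_le) simp_all
  moreover have "Min (fom_error A b ` {0..k}) \<le> fom_error A b j"
    using \<open>j \<le> k\<close> by (intro Min_le) auto
  ultimately show ?thesis
    by (rule order_trans[rotated])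
qed

end
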